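(* Let $\mathcal{H}_B$ be the two-mode bosonic Fock space with orthonormal basis $\{\lvert m_1, m_0\rangle_B : m_1, m_0 \ge 0\}$, where $\lvert m_1,m_0\rangle_B$ denotes $m_1$ photons in the "$1$" mode and $m_0$ photons in the "$0$" mode. Let $\mathcal{H}_E$ be a Hilbert space. Let $$\lvert\psi_0\rangle = \sum_{m_1\ge 0,\, m_0\ge 0} \lvert m_1,m_0\rangle_B \lvert e_{m_1,m_0}\rangle_E \in \mathcal{H}_B\otimes\mathcal{H}_E$$ be a unit vector, where the $\lvert e_{m_1,m_0}\rangle_E\in\mathcal{H}_E$ are (unnormalized) vectors. Let $U_R$ be a unitary operator on $\mathcal{H}_B\otimes\mathcal{H}_E$ such that for all $m_1,m_0\ge 0$, $$U_R \lvert m_1,m_0\rangle_B\lvert e_{m_1,m_0}\rangle_E = \lvert 0,1\rangle_B \lvert g^{0,1}_{m_1,m_0}\rangle_E + \lvert 1,0\rangle_B \lvert g^{1,0}_{m_1,m_0}\rangle_E + \lvert 0,0\rangle_B \lvert g^{0,0}_{m_1,m_0}\rangle_E$$ for some vectors $\lvert g^{j,k}_{m_1,m_0}\rangle_E\in\mathcal{H}_E$. Define $$\lvert h_0\rangle_E = \frac{1}{\sqrt 2}\sum_{m_1\ge 1,\, m_0\ge 1}\lvert g^{0,1}_{m_1,m_0}\rangle_E,\qquad \lvert h_1\rangle_E = \frac{1}{\sqrt 2}\sum_{m_1\ge 1,\, m_0\ge 1}\lvert g^{1,0}_{m_1,m_0}\rangle_E,$$ and $$p_{\mathrm{double}} =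 \sum_{m_1\ge 1,\, m_0\ge 1}\langle e_{m_1,m_0}\vert e_{m_1,m_0}\rangle_E .$$ Then $\langle h_0\vert h_0\rangle_E \le \frac12 p_{\mathrm{double}}$ and $\langle h_1\vert h_1\rangle_E \le \frac12 p_{\mathrm{double}}$.
   Context: $p_{\mathrm{double}}$ is the probability that a computational-basis photon-number measurement of the $B$ system of $\lvert\psi_0\rangle$ yields at least one photon in each of the two modes (a "double-click"). Infinite sums are understood as norm-convergent sums in the respective Hilbert spaces. *)

theory Defs
  imports "HOL-Analysis.Analysis"
begin

text \<open>H_E is modelled as l2('x) for an arbitrary index type 'x (every complex Hilbert
space is unitarily isomorphic to such a space via an orthonormal basis).
H_B (x) H_E is modelled as l2(nat x nat, H_E) = l2(nat x nat x 'x):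
a vector is a function psi m1 m0 x; the component psi m1 m0 is the H_E-vector
attached to the Fock basis vector |m1,m0>_B.\<close>

type_synonym 'x vecE = "'x \<Rightarrow> complex"
type_synonym 'x vecT = "nat \<Rightarrow> nat \<Rightarrow> 'x \<Rightarrow> complex"

definition l2E :: "'x vecE set" where
  "l2E = {f. (\<lambda>x. (cmod (f x))\<^sup>2) summable_on UNIV}"

definition normE :: "'x vecE \<Rightarrow> real" where
  "normE f = sqrt (\<Sum>\<^sub>\<infinity>x. (cmod (f x))\<^sup>2)"

definition l2T :: "'x vecT set" where
  "l2T = {\<psi>. (\<lambda>(a,b,x). (cmod (\<psi> a b x))\<^sup>2) summable_on UNIV}"

definition innerT :: "'x vecT \<Rightarrow> 'x vecT \<Rightarrow> complex" where
  "innerT \<psi> \<phi> = (\<Sum>\<^sub>\<infinity>(a,b,x). cnj (\<psi> a b x) * \<phi> a b x)"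

definition normT :: "'x vecT \<Rightarrow> real" where
  "normT \<psi> = sqrt (\<Sum>\<^sub>\<infinity>(a,b,x). (cmod (\<psi> a b x))\<^sup>2)"

definition ket :: "nat \<Rightarrow> nat \<Rightarrow> 'x vecE \<Rightarrow> 'x vecT" where
  "ket m1 m0 v = (\<lambda>a b x. if a = m1 \<and> b = m0 then v x else 0)"

definition addT :: "'x vecT \<Rightarrow> 'x vecT \<Rightarrow> 'x vecT" where
  "addT \<psi> \<phi> = (\<lambda>a b x. \<psi> a b x + \<phi> a b x)"

definition unitaryT :: "('x vecT \<Rightarrow> 'x vecT) \<Rightarrow> bool" where
  "unitaryT U \<longleftrightarrow> U ` l2T = l2T \<and>
     (\<forall>\<psi>\<in>l2T. \<forall>\<phi>\<in>l2T. \<forall>c::complex.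
        U (\<lambda>a b x. \<psi> a b x + c * \<phi> a b x) = (\<lambda>a b x. U \<psi> a b x + c * U \<phi> a b x)) \<and>
     (\<forall>\<psi>\<in>l2T. \<forall>\<phi>\<in>l2T. innerT (U \<psi>) (U \<phi>) = innerT \<psi> \<phi>)"

definition hasSumE :: "('i \<Rightarrow> 'x vecE) \<Rightarrow> 'i set \<Rightarrow> 'x vecE \<Rightarrow> bool" where
  "hasSumE g A s \<longleftrightarrow> (\<forall>\<epsilon>>0. \<exists>F. finite F \<and> F \<subseteq> A \<and>
     (\<forall>G. finite G \<and> F \<subseteq> G \<and> G \<subseteq> A \<longrightarrow>
        normE (\<lambda>x. (\<Sum>i\<in>G. g i x) - s x) < \<epsilon>))"

end

theory Submission
  imports Defs
begin

text \<open>
  Let \<open>P\<^sub>S\<close> restrict a vector to the Fock states \<open>|m\<^sub>1,m\<^sub>0\<rangle>\<close> with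
  \<open>(m\<^sub>1,m\<^sub>0) \<in> S\<close>, so that \<open>p\<^sub>d\<^sub>o\<^sub>u\<^sub>b\<^sub>l\<^sub>e\<close> is the squared norm of \<open>P\<^sub>D \<psi>\<^sub>0\<close>.
  By linearity of \<open>U\<close>, the partial sum of the \<open>g\<^sup>0\<^sup>,\<^sup>1\<close> over a finite \<open>G \<subseteq> D\<close> is the
  \<open>|0,1\<rangle>\<close>-component of \<open>U P\<^sub>G \<psi>\<^sub>0\<close>, and it differs from the \<open>|0,1\<rangle>\<close>-component of
  \<open>U P\<^sub>D \<psi>\<^sub>0\<close> by a component of \<open>U P\<^sub>D\<^sub>-\<^sub>G \<psi>\<^sub>0\<close>.  By unitarity the latter has
  norm at most the norm of \<open>P\<^sub>D\<^sub>-\<^sub>G \<psi>\<^sub>0\<close>, the square root of a tail of the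
  convergent series \<open>p\<^sub>d\<^sub>o\<^sub>u\<^sub>b\<^sub>l\<^sub>e\<close>.  Hence \<open>\<surd>2 h\<^sub>0\<close> is a component of \<open>U P\<^sub>D \<psi>\<^sub>0\<close>,
  whose squared norm is \<open>p\<^sub>d\<^sub>o\<^sub>u\<^sub>b\<^sub>l\<^sub>e\<close>; likewise for \<open>h\<^sub>1\<close> and \<open>|1,0\<rangle>\<close>.
\<close>

lemma normE_nonneg: "0 \<le> normE f"
  unfolding normE_def by (simp add: infsum_nonneg)

lemma normE_not_l2E: "f \<notin> l2E \<Longrightarrow> normE f = 0"
  unfolding l2E_def normE_def by (simp add: infsum_not_exists)

lemma normE_sq: "(normE f)\<^sup>2 = (\<Sum>\<^sub>\<infinity>x. (cmod (f x))\<^sup>2)"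
  unfolding normE_def by (simp add: infsum_nonneg)

lemma norm_le_normE:
  assumes "f \<in> l2E" shows "cmod (f x) \<le> normE f"
proof -
  have "(cmod (f x))\<^sup>2 \<le> (normE f)\<^sup>2"
    unfolding normE_sq using assms
    by (intro finite_sum_le_infsum[of _ UNIV "{x}", simplified]) (auto simp: l2E_def)
  then show ?thesis by (simp add: abs_le_square_iff normE_nonneg)
qed

lemma normE_mult: "normE (\<lambda>x. c * f x) = cmod c * normE f"
  unfolding normE_def
  by (simp add: norm_mult power_mult_distrib infsum_cmult_right' real_sqrt_mult)

lemma l2E_mult: "f \<in> l2E \<Longrightarrow> (\<lambda>x. c * f x) \<in> l2E"
  unfolding l2E_def by (simp add: norm_mult power_mult_distrib summable_on_cmult_right)

lemma l2E_add:
  assumes "f \<in> l2E" and "g \<in> l2E" shows "(\<lambda>x. f x + g x) \<in> l2E"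
proof -
  have "(cmod (f x + g x))\<^sup>2 \<le> 2 * (cmod (f x))\<^sup>2 + 2 * (cmod (g x))\<^sup>2" for x
  proof -
    have "(cmod (f x + g x))\<^sup>2 \<le> (cmod (f x) + cmod (g x))\<^sup>2"
      by (rule power_mono[OF norm_triangle_ineq norm_ge_zero])
    also have "\<dots> \<le> 2 * (cmod (f x))\<^sup>2 + 2 * (cmod (g x))\<^sup>2"
      using sum_squares_bound[of "cmod (f x)" "cmod (g x)"] by (simp add: power2_sum)
    finally show ?thesis .
  qed
  moreover have "(\<lambda>x. 2 * (cmod (f x))\<^sup>2 + 2 * (cmod (g x))\<^sup>2) summable_on UNIV"
    using assms by (intro summable_on_add summable_on_cmult_right) (auto simp: l2E_def)
  ultimately show ?thesis
    unfolding l2E_def by (auto intro: summable_on_comparison_test)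
qed

lemma l2E_diff: "f \<in> l2E \<Longrightarrow> g \<in> l2E \<Longrightarrow> (\<lambda>x. f x - g x) \<in> l2E"
  using l2E_add[of f "\<lambda>x. (-1) * g x"] l2E_mult[of g "-1"] by simp

lemma l2E_sum: "(\<And>i. i \<in> G \<Longrightarrow> g i \<in> l2E) \<Longrightarrow> (\<lambda>x. \<Sum>i\<in>G. g i x) \<in> l2E"
proof (induction G rule: infinite_finite_induct)
  case (insert i G)
  then show ?case using l2E_add[of "g i" "\<lambda>x. \<Sum>i\<in>G. g i x"] by simp
qed (simp_all add: l2E_def)

lemma hasSumE_iff_tendsto:
  "hasSumE g A s \<longleftrightarrow> ((\<lambda>G. normE (\<lambda>x. (\<Sum>i\<in>G. g i x) - s x)) \<longlongrightarrow> 0) (finite_subsets_at_top A)"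
  unfolding hasSumE_def tendsto_iff eventually_finite_subsets_at_top
  by (simp add: dist_real_def normE_nonneg)

lemma hasSumE_imp_has_sum:
  assumes "hasSumE g A s" and "s \<in> l2E" and "\<And>i. i \<in> A \<Longrightarrow> g i \<in> l2E"
  shows "((\<lambda>i. g i x) has_sum s x) A"
proof -
  have "\<forall>\<^sub>F G in finite_subsets_at_top A.
      cmod ((\<Sum>i\<in>G. g i x) - s x) \<le> normE (\<lambda>x. (\<Sum>i\<in>G. g i x) - s x)"
  proof (rule eventually_finite_subsets_at_top_weakI)
    fix G assume "G \<subseteq> A"
    then have "(\<lambda>x. (\<Sum>i\<in>G. g i x) - s x) \<in> l2E"
      using assms(2,3) by (intro l2E_diff l2E_sum) auto
    then show "cmod ((\<Sum>i\<in>G. g i x) - s x) \<le> normE (\<lambda>x. (\<Sum>i\<in>G. g i x) - s x)"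
      by (rule norm_le_normE)
  qed
  then have "((\<lambda>G. (\<Sum>i\<in>G. g i x) - s x) \<longlongrightarrow> 0) (finite_subsets_at_top A)"
    using assms(1) unfolding hasSumE_iff_tendsto by (rule Lim_null_comparison)
  then show ?thesis
    unfolding has_sum_def by (rule LIM_zero_cancel)
qed

text \<open>Uniqueness holds only among limits in \<open>l2E\<close>: as \<open>normE\<close> vanishes off \<open>l2E\<close>,
  \<open>hasSumE g A s\<close> holds for every \<open>s \<notin> l2E\<close> when all \<open>g i \<in> l2E\<close>.\<close>

lemma hasSumE_unique:
  assumes "hasSumE g A s" and "hasSumE g A t" and "s \<in> l2E" and "t \<in> l2E"
    and "\<And>i. i \<in> A \<Longrightarrow> g i \<in> l2E"
  shows "s = t"
proof
  fix x
  show "s x = t x"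
    using hasSumE_imp_has_sum[OF assms(1,3,5)] hasSumE_imp_has_sum[OF assms(2,4,5)]
    by (rule has_sum_unique)
qed

lemma normT_nonneg: "0 \<le> normT \<psi>"
  unfolding normT_def by (intro real_sqrt_ge_zero infsum_nonneg) (auto split: prod.splits)

lemma normT_sq: "(normT \<psi>)\<^sup>2 = (\<Sum>\<^sub>\<infinity>(a, b, x). (cmod (\<psi> a b x))\<^sup>2)"
  unfolding normT_def by (rule real_sqrt_pow2, rule infsum_nonneg) (auto split: prod.splits)

lemma l2T_component:
  assumes "\<psi> \<in> l2T" shows "\<psi> a b \<in> l2E"
proof -
  have "(\<lambda>(a, b, x). (cmod (\<psi> a b x))\<^sup>2) summable_on UNIV"
    using assms by (simp add: l2T_def)
  then have "(\<lambda>(a, b, x). (cmod (\<psi> a b x))\<^sup>2) summable_on range (\<lambda>x. (a, b, x))"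
    by (rule summable_on_subset_banach) simp
  then show ?thesis
    unfolding l2E_def by (subst (asm) summable_on_reindex) (auto simp: inj_def o_def)
qed

lemma normT_sq_has_sum:
  assumes "\<psi> \<in> l2T"
  shows "((\<lambda>(a, b). (normE (\<psi> a b))\<^sup>2) has_sum (normT \<psi>)\<^sup>2) UNIV"
proof -
  define h where "h = (\<lambda>((a, b), x). (cmod (\<psi> a b x))\<^sup>2)"
  have "((\<lambda>(a, b, x). (cmod (\<psi> a b x))\<^sup>2) has_sum (normT \<psi>)\<^sup>2) UNIV"
    using assms by (simp add: l2T_def normT_sq)
  moreover have "(h has_sum (normT \<psi>)\<^sup>2) (Sigma UNIV (\<lambda>_. UNIV)) \<longleftrightarrow>
      ((\<lambda>(a, b, x). (cmod (\<psi> a b x))\<^sup>2) has_sum (normT \<psi>)\<^sup>2) UNIV"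
    by (rule has_sum_reindex_bij_witness[where j="\<lambda>((a, b), x). (a, b, x)"
          and i="\<lambda>(a, b, x). ((a, b), x)"]) (auto simp: h_def)
  ultimately have "(h has_sum (normT \<psi>)\<^sup>2) (Sigma UNIV (\<lambda>_. UNIV))"
    by blast
  moreover have "((\<lambda>x. h (p, x)) has_sum (\<lambda>(a, b). (normE (\<psi> a b))\<^sup>2) p) UNIV" for p
    using l2T_component[OF assms, of "fst p" "snd p"]
    by (cases p) (simp add: h_def l2E_def normE_sq)
  ultimately show ?thesis
    by (rule has_sum_SigmaD)
qed

lemma normE_le_normT:
  assumes "\<psi> \<in> l2T" shows "normE (\<psi> a b) \<le> normT \<psi>"
proof -
  have "(\<Sum>p\<in>{(a, b)}. (\<lambda>(a, b). (normE (\<psi> a b))\<^sup>2) p) \<le> (normT \<psi>)\<^sup>2"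
    by (rule finite_sum_le_has_sum[OF normT_sq_has_sum[OF assms]]) auto
  then have "(normE (\<psi> a b))\<^sup>2 \<le> (normT \<psi>)\<^sup>2"
    by simp
  then show ?thesis by (rule power2_le_imp_le) (rule normT_nonneg)
qed

definition restrictT :: "'x vecT \<Rightarrow> (nat \<times> nat) set \<Rightarrow> 'x vecT" where
  "restrictT \<psi> S = (\<lambda>a b x. if (a, b) \<in> S then \<psi> a b x else 0)"

lemma restrictT_l2T:
  assumes "\<psi> \<in> l2T" shows "restrictT \<psi> S \<in> l2T"
proof -
  have "(\<lambda>(a, b, x). (cmod (\<psi> a b x))\<^sup>2) summable_on UNIV"
    using assms by (simp add: l2T_def)
  then show ?thesis
    unfolding l2T_def by (auto intro: summable_on_comparison_test simp: restrictT_def)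
qed

lemma normT_restrictT_sq:
  assumes "\<psi> \<in> l2T"
  shows "(normT (restrictT \<psi> S))\<^sup>2 = (\<Sum>\<^sub>\<infinity>(a, b)\<in>S. (normE (\<psi> a b))\<^sup>2)"
proof -
  have "(normT (restrictT \<psi> S))\<^sup>2 = (\<Sum>\<^sub>\<infinity>(a, b). (normE (restrictT \<psi> S a b))\<^sup>2)"
    using normT_sq_has_sum[OF restrictT_l2T[OF assms]] by (rule infsumI[symmetric])
  also have "\<dots> = (\<Sum>\<^sub>\<infinity>(a, b)\<in>S. (normE (\<psi> a b))\<^sup>2)"
    by (rule infsum_cong_neutral) (auto simp: restrictT_def normE_def)
  finally show ?thesis .
qed

lemma restrictT_singleton: "restrictT \<psi> {(m1, m0)} = ket m1 m0 (\<psi> m1 m0)"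
  by (auto simp: restrictT_def ket_def fun_eq_iff)

lemma innerT_self:
  assumes "\<psi> \<in> l2T" shows "innerT \<psi> \<psi> = complex_of_real ((normT \<psi>)\<^sup>2)"
proof -
  define f where "f = (\<lambda>(a, b, x). (cmod (\<psi> a b x))\<^sup>2)"
  have "(f has_sum (normT \<psi>)\<^sup>2) UNIV"
    using assms by (simp add: f_def l2T_def normT_sq)
  then have "((\<lambda>t. complex_of_real (f t)) has_sum complex_of_real ((normT \<psi>)\<^sup>2)) UNIV"
    by (rule has_sum_of_real)
  moreover have "(\<lambda>(a, b, x). cnj (\<psi> a b x) * \<psi> a b x) = (\<lambda>t. complex_of_real (f t))"
    by (auto simp: fun_eq_iff f_def complex_mult_cnj cmod_power2 mult.commute)
  ultimately show ?thesis
    unfolding innerT_def by (simp add: infsumI)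
qed

lemma unitaryT_l2T: "unitaryT U \<Longrightarrow> \<psi> \<in> l2T \<Longrightarrow> U \<psi> \<in> l2T"
  unfolding unitaryT_def by blast

lemma unitaryT_add:
  assumes "unitaryT U" and "\<psi> \<in> l2T" and "\<phi> \<in> l2T"
  shows "U (\<lambda>a b x. \<psi> a b x + \<phi> a b x) = (\<lambda>a b x. U \<psi> a b x + U \<phi> a b x)"
proof -
  have "U (\<lambda>a b x. \<psi> a b x + 1 * \<phi> a b x) = (\<lambda>a b x. U \<psi> a b x + 1 * U \<phi> a b x)"
    using assms unfolding unitaryT_def by blast
  then show ?thesis by simp
qed

lemma l2T_zero: "(\<lambda>a b x. 0) \<in> l2T"
  unfolding l2T_def by (simp add: summable_on_0 case_prod_beta)

lemma unitaryT_zero: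
  assumes "unitaryT U" shows "U (\<lambda>a b x. 0) = (\<lambda>a b x. 0)"
  using unitaryT_add[OF assms l2T_zero l2T_zero] by (simp add: fun_eq_iff)

lemma unitaryT_normT:
  assumes "unitaryT U" and "\<psi> \<in> l2T" shows "normT (U \<psi>) = normT \<psi>"
proof -
  have "innerT (U \<psi>) (U \<psi>) = innerT \<psi> \<psi>"
    using assms unfolding unitaryT_def by blast
  then have "complex_of_real ((normT (U \<psi>))\<^sup>2) = complex_of_real ((normT \<psi>)\<^sup>2)"
    using assms innerT_self unitaryT_l2T by metis
  then have "(normT (U \<psi>))\<^sup>2 = (normT \<psi>)\<^sup>2"
    by (rule of_real_eq_iff[THEN iffD1])
  then show ?thesis
    using normT_nonneg power2_eq_iff_nonneg by blast
qed

lemma unitaryT_restrictT_finite_sum: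
  assumes "unitaryT U" and "\<psi> \<in> l2T" and "finite G"
  shows "U (restrictT \<psi> G) a b x = (\<Sum>p\<in>G. U (restrictT \<psi> {p}) a b x)"
  using assms(3)
proof (induction G rule: finite_induct)
  case empty
  then show ?case
    using unitaryT_zero[OF assms(1)] by (simp add: restrictT_def)
next
  case (insert p G)
  then have "restrictT \<psi> (insert p G) = (\<lambda>a b x. restrictT \<psi> {p} a b x + restrictT \<psi> G a b x)"
    by (auto simp: restrictT_def fun_eq_iff)
  then show ?case
    using insert unitaryT_add[OF assms(1) restrictT_l2T[OF assms(2)] restrictT_l2T[OF assms(2)]]
    by simp
qed

lemma normE_unitaryT_restrictT_le:
  assumes "unitaryT U" and "\<psi> \<in> l2T"
  shows "normE (U (restrictT \<psi> S) a b) \<le> sqrt (\<Sum>\<^sub>\<infinity>(m1, m0)\<in>S. (normE (\<psi> m1 m0))\<^sup>2)"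
proof -
  have "normE (U (restrictT \<psi> S) a b) \<le> normT (U (restrictT \<psi> S))"
    by (rule normE_le_normT[OF unitaryT_l2T[OF assms(1) restrictT_l2T[OF assms(2)]]])
  also have "\<dots> = normT (restrictT \<psi> S)"
    by (rule unitaryT_normT[OF assms(1) restrictT_l2T[OF assms(2)]])
  also have "\<dots> = sqrt (\<Sum>\<^sub>\<infinity>(m1, m0)\<in>S. (normE (\<psi> m1 m0))\<^sup>2)"
    by (rule real_sqrt_unique[symmetric, OF normT_restrictT_sq[OF assms(2)] normT_nonneg])
  finally show ?thesis .
qed

lemma hasSumE_unitaryT_restrictT:
  assumes U: "unitaryT U" and \<psi>: "\<psi> \<in> l2T"
    and g: "\<And>p x. U (restrictT \<psi> {p}) i j x = g p x"
  shows "hasSumE g D (U (restrictT \<psi> D) i j)"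
proof -
  define w where "w = (\<lambda>(m1, m0). (normE (\<psi> m1 m0))\<^sup>2)"
  have "w summable_on UNIV"
    using normT_sq_has_sum[OF \<psi>] unfolding w_def summable_on_def by blast
  then have w: "w summable_on D"
    by (rule summable_on_subset_banach) simp
  have tail: "normE (\<lambda>x. (\<Sum>p\<in>G. g p x) - U (restrictT \<psi> D) i j x) \<le> sqrt (infsum w D - sum w G)"
    if G: "finite G" "G \<subseteq> D" for G
  proof -
    have "restrictT \<psi> D = (\<lambda>a b x. restrictT \<psi> G a b x + restrictT \<psi> (D - G) a b x)"
      using G by (auto simp: restrictT_def fun_eq_iff)
    then have "U (restrictT \<psi> D) i j x = (\<Sum>p\<in>G. g p x) + U (restrictT \<psi> (D - G)) i j x" for x
      using unitaryT_add[OF U restrictT_l2T[OF \<psi>] restrictT_l2T[OF \<psi>]]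
        unitaryT_restrictT_finite_sum[OF U \<psi> G(1)] g by simp
    then have "normE (\<lambda>x. (\<Sum>p\<in>G. g p x) - U (restrictT \<psi> D) i j x)
        = normE (U (restrictT \<psi> (D - G)) i j)"
      using normE_mult[of "-1" "U (restrictT \<psi> (D - G)) i j"] by simp
    also have "\<dots> \<le> sqrt (infsum w (D - G))"
      unfolding w_def by (rule normE_unitaryT_restrictT_le[OF U \<psi>])
    also have "infsum w (D - G) = infsum w D - sum w G"
      using infsum_Diff[OF w summable_on_subset_banach[OF w G(2)] G(2)] G(1) by simp
    finally show ?thesis .
  qed
  have "\<forall>\<^sub>F G in finite_subsets_at_top D.
      0 \<le> normE (\<lambda>x. (\<Sum>p\<in>G. g p x) - U (restrictT \<psi> D) i j x)"
    by (simp add: normE_nonneg)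
  moreover have "\<forall>\<^sub>F G in finite_subsets_at_top D.
      normE (\<lambda>x. (\<Sum>p\<in>G. g p x) - U (restrictT \<psi> D) i j x) \<le> sqrt (infsum w D - sum w G)"
    using tail by (rule eventually_finite_subsets_at_top_weakI)
  moreover have "((\<lambda>G. infsum w D - sum w G) \<longlongrightarrow> infsum w D - infsum w D) (finite_subsets_at_top D)"
    by (intro tendsto_diff tendsto_const infsum_tendsto w)
  then have "((\<lambda>G. sqrt (infsum w D - sum w G)) \<longlongrightarrow> sqrt (infsum w D - infsum w D))
      (finite_subsets_at_top D)"
    by (rule tendsto_real_sqrt)
  then have "((\<lambda>G. sqrt (infsum w D - sum w G)) \<longlongrightarrow> 0) (finite_subsets_at_top D)"
    by simp
  ultimately show ?thesis
    unfolding hasSumE_iff_tendsto by (rule tendsto_sandwich[OF _ _ tendsto_const])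
qed

lemma normE_sq_le_of_hasSumE:
  assumes U: "unitaryT U" and \<psi>: "\<psi> \<in> l2T"
    and g: "\<And>p x. U (restrictT \<psi> {p}) i j x = g p x"
    and g_l2E: "\<And>p. p \<in> D \<Longrightarrow> g p \<in> l2E"
    and s: "hasSumE g D s"
  shows "(normE s)\<^sup>2 \<le> (\<Sum>\<^sub>\<infinity>(m1, m0)\<in>D. (normE (\<psi> m1 m0))\<^sup>2)"
proof (cases "s \<in> l2E")
  case True
  have "s = U (restrictT \<psi> D) i j"
    using s hasSumE_unitaryT_restrictT[OF U \<psi> g] True
      l2T_component[OF unitaryT_l2T[OF U restrictT_l2T[OF \<psi>]]] g_l2E
    by (rule hasSumE_unique)
  then have "normE s \<le> sqrt (\<Sum>\<^sub>\<infinity>(m1, m0)\<in>D. (normE (\<psi> m1 m0))\<^sup>2)"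
    by (simp add: normE_unitaryT_restrictT_le[OF U \<psi>])
  then have "(normE s)\<^sup>2 \<le> (sqrt (\<Sum>\<^sub>\<infinity>(m1, m0)\<in>D. (normE (\<psi> m1 m0))\<^sup>2))\<^sup>2"
    by (rule power_mono[OF _ normE_nonneg])
  then show ?thesis
    by (simp add: infsum_nonneg split: prod.splits)
next
  case False
  then show ?thesis
    by (simp add: normE_not_l2E infsum_nonneg split: prod.splits)
qed

lemma normE_divide: "normE (\<lambda>x. f x / c) = normE f / cmod c"
  using normE_mult[of "inverse c" f] by (simp add: divide_inverse mult.commute norm_inverse)

theorem lemma1:
  fixes e g01 g10 g00 :: "nat \<Rightarrow> nat \<Rightarrow> 'x \<Rightarrow> complex"
    and U :: "'x vecT \<Rightarrow> 'x vecT"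
  assumes e_l2: "e \<in> l2T"
    and unit: "normT e = 1"
    and g_l2: "\<And>m1 m0. g01 m1 m0 \<in> l2E \<and> g10 m1 m0 \<in> l2E \<and> g00 m1 m0 \<in> l2E"
    and U_unitary: "unitaryT U"
    and U_action: "\<And>m1 m0. U (ket m1 m0 (e m1 m0)) =
         addT (ket 0 1 (g01 m1 m0)) (addT (ket 1 0 (g10 m1 m0)) (ket 0 0 (g00 m1 m0)))"
  defines "D \<equiv> {(m1, m0). m1 \<ge> (1::nat) \<and> m0 \<ge> (1::nat)}"
    and "p_double \<equiv> (\<Sum>\<^sub>\<infinity>(m1, m0)\<in>{(m1, m0). m1 \<ge> (1::nat) \<and> m0 \<ge> (1::nat)}. (normE (e m1 m0))\<^sup>2)"
  shows "(\<exists>s. hasSumE (\<lambda>(m1, m0). g01 m1 m0) D s)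
       \<and> (\<exists>s. hasSumE (\<lambda>(m1, m0). g10 m1 m0) D s)
       \<and> (\<forall>s. hasSumE (\<lambda>(m1, m0). g01 m1 m0) D s \<longrightarrow>
            (normE (\<lambda>x. s x / complex_of_real (sqrt 2)))\<^sup>2 \<le> p_double / 2)
       \<and> (\<forall>s. hasSumE (\<lambda>(m1, m0). g10 m1 m0) D s \<longrightarrow>
            (normE (\<lambda>x. s x / complex_of_real (sqrt 2)))\<^sup>2 \<le> p_double / 2)"
proof -
  have g01: "U (restrictT e {p}) 0 1 x = (\<lambda>(m1, m0). g01 m1 m0) p x" for p x
    by (cases p) (simp only: restrictT_singleton U_action, simp add: addT_def ket_def)
  have g10: "U (restrictT e {p}) 1 0 x = (\<lambda>(m1, m0). g10 m1 m0) p x" for p x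
    by (cases p) (simp only: restrictT_singleton U_action, simp add: addT_def ket_def)
  have l2E01: "(\<lambda>(m1, m0). g01 m1 m0) p \<in> l2E" and l2E10: "(\<lambda>(m1, m0). g10 m1 m0) p \<in> l2E"
    for p using g_l2 by (simp_all split: prod.splits)
  have p_double: "p_double = (\<Sum>\<^sub>\<infinity>(m1, m0)\<in>D. (normE (e m1 m0))\<^sup>2)"
    unfolding p_double_def D_def ..
  have halve: "(normE (\<lambda>x. s x / complex_of_real (sqrt 2)))\<^sup>2 \<le> p_double / 2"
    if "(normE s)\<^sup>2 \<le> p_double" for s :: "'x vecE"
    using that by (simp add: normE_divide power_divide)
  show ?thesis
  proof (intro conjI allI impI)
    show "\<exists>s. hasSumE (\<lambda>(m1, m0). g01 m1 m0) D s"
      using hasSumE_unitaryT_restrictT[OF U_unitary e_l2 g01] by blast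
    show "\<exists>s. hasSumE (\<lambda>(m1, m0). g10 m1 m0) D s"
      using hasSumE_unitaryT_restrictT[OF U_unitary e_l2 g10] by blast
  next
    fix s assume "hasSumE (\<lambda>(m1, m0). g01 m1 m0) D s"
    from normE_sq_le_of_hasSumE[OF U_unitary e_l2 g01 l2E01 this]
    show "(normE (\<lambda>x. s x / complex_of_real (sqrt 2)))\<^sup>2 \<le> p_double / 2"
      unfolding p_double[symmetric] by (rule halve)
  next
    fix s assume "hasSumE (\<lambda>(m1, m0). g10 m1 m0) D s"
    from normE_sq_le_of_hasSumE[OF U_unitary e_l2 g10 l2E10 this]
    show "(normE (\<lambda>x. s x / complex_of_real (sqrt 2)))\<^sup>2 \<le> p_double / 2"
      unfolding p_double[symmetric] by (rule halve)
  qed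
qed

end
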